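(* Let $\xi=(\xi_+,\xi_-)\in\mathcal{P}^2$ be minimal. Then the following three statements are equivalent: (1) there is a CSCA $\mathbf{a}$ with $\mathbf{a}\xi=u\xi$; (2) there is a CSCA $\mathbf{b}$ with $\mathbf{b}\xi=\binom{1}{u}$; (3) $\xi\wedge\bar\xi=u^{-1}+u$.
   Context: $\mathcal{P}$ denotes the ring of Laurent polynomials in $u$ over $\mathbb{Z}_2$; $\bar p(u)=p(u^{-1})$, applied entrywise to vectors. $\mathcal{R}$ is the subring of palindromes ($\bar p=p$). A CSCA is a $2\times2$ matrix with entries in $\mathcal{R}$ and determinant $1$. $\xi$ is minimal if $\xi_+,\xi_-$ have no common non-invertible divisor in $\mathcal{P}$. The wedge product is $\xi\wedge\eta=\xi_+\eta_-+\eta_+\xi_-$. *)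

theory Defs
  imports "HOL-Library.Z2" "HOL-Computational_Algebra.Formal_Laurent_Series"
begin

(* The ring P of Laurent polynomials in u over Z_2 is realised as the subring of
   formal Laurent series  bit fls  with finite support; u = fls_X, u^{-1} = fls_X_inv. *)

type_synonym lp = "bit fls"

definition laurent_poly :: "lp \<Rightarrow> bool" where
  "laurent_poly p \<longleftrightarrow> finite {n. fls_nth p n \<noteq> 0}"

(* bar p (u) = p(u^{-1}) : reversal of coefficients (only meaningful on P) *)
lift_definition lbar :: "lp \<Rightarrow> lp" is
  "\<lambda>f n. if finite {n. f n \<noteq> 0} then f (- n) else 0"
proof -
  fix f :: "int \<Rightarrow> bit"
  show "\<forall>\<^sub>\<infinity> n::nat. (if finite {n. f n \<noteq> 0} then f (- (- int n)) else 0) = 0"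
  proof (cases "finite {n. f n \<noteq> 0}")
    case True
    have "finite (int -` {n. f n \<noteq> 0})"
      using True by (rule finite_vimageI) (simp add: inj_def)
    then have "finite {m::nat. f (int m) \<noteq> 0}" by (simp add: vimage_def)
      then have "finite {m::nat. (if finite {n. f n \<noteq> 0} then f (- (- int m)) else 0) \<noteq> 0}"
      using True by simp
    then show ?thesis by (simp add: MOST_iff_finiteNeg)
  qed simp
qed

definition lp_dvd :: "lp \<Rightarrow> lp \<Rightarrow> bool" where
  "lp_dvd d p \<longleftrightarrow> (\<exists>r. laurent_poly r \<and> p = d * r)"

definition lp_unit :: "lp \<Rightarrow> bool" where
  "lp_unit d \<longleftrightarrow> (\<exists>r. laurent_poly r \<and> d * r = 1)"

definition palindrome :: "lp \<Rightarrow> bool" where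
  "palindrome p \<longleftrightarrow> laurent_poly p \<and> lbar p = p"

type_synonym lmat = "lp \<times> lp \<times> lp \<times> lp"

definition CSCA :: "lmat \<Rightarrow> bool" where
  "CSCA A \<longleftrightarrow> (case A of (a11, a12, a21, a22) \<Rightarrow>
     palindrome a11 \<and> palindrome a12 \<and> palindrome a21 \<and> palindrome a22 \<and>
     a11 * a22 - a12 * a21 = 1)"

definition mat_vec :: "lmat \<Rightarrow> lp \<times> lp \<Rightarrow> lp \<times> lp" where
  "mat_vec A x = (case A of (a11, a12, a21, a22) \<Rightarrow> case x of (x1, x2) \<Rightarrow>
     (a11 * x1 + a12 * x2, a21 * x1 + a22 * x2))"

definition minimal :: "lp \<times> lp \<Rightarrow> bool" where
  "minimal xi \<longleftrightarrow> (\<forall>d. laurent_poly d \<and> lp_dvd d (fst xi) \<and> lp_dvd d (snd xi) \<longrightarrow> lp_unit d)"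

definition wedge :: "lp \<times> lp \<Rightarrow> lp \<times> lp \<Rightarrow> lp" where
  "wedge xi eta = fst xi * snd eta + fst eta * snd xi"

definition vbar :: "lp \<times> lp \<Rightarrow> lp \<times> lp" where
  "vbar xi = (lbar (fst xi), lbar (snd xi))"

end

theory Submission
  imports Defs "HOL-Computational_Algebra.Polynomial_FPS"
begin

text \<open>
  Write \<open>t = u\<^sup>-\<^sup>1 + u\<close> and \<open>w = \<xi> \<and> bar \<xi>\<close>. Since \<open>u\<^sup>2 = 1 + t u\<close> with \<open>t\<close> a palindrome,
  every Laurent polynomial is \<open>d + b u\<close> with palindromes \<open>d, b\<close>. For \<open>\<xi> = (d + b u, c + a u)\<close>
  one computes \<open>w = (ad + bc) t\<close> and \<open>[a b; c d] \<xi> = (ad + bc) (1, u)\<close>, while a CSCA \<open>B\<close> with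
  \<open>B \<xi> = (1, u)\<close> forces \<open>\<xi> = adj B (1, u)\<close>, which has this shape; this gives (2) \<open>\<Leftrightarrow>\<close> (3).
  If \<open>B \<xi> = (1, u)\<close>, then \<open>B\<^sup>-\<^sup>1 C B\<close> witnesses (1), where \<open>C = [0 1; 1 t]\<close> has eigenvector
  \<open>(1, u)\<close> for the eigenvalue \<open>u\<close>.

  For (1) \<open>\<Rightarrow>\<close> (3): \<open>u\<close> is a root of the characteristic polynomial \<open>x\<^sup>2 + (tr A) x + 1\<close>,
  so \<open>tr A = t\<close>. With this, minimality (through a Bezout relation \<open>r \<xi>\<^sub>+ + s \<xi>\<^sub>- = 1\<close>)
  yields a palindrome \<open>L\<close> with \<open>w L = t\<close>. Nonzero palindromes have subdegree \<open>\<le> 0\<close>, with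
  equality only for \<open>1\<close>, and \<open>t\<close> has subdegree \<open>-1\<close>; since \<open>w = z + bar z\<close> has constant
  coefficient \<open>0\<close>, \<open>w \<noteq> 1\<close>, hence \<open>L = 1\<close> and \<open>w = t\<close>.
\<close>

lemma lp_add_self [simp]: "(x::lp) + x = 0"
  by (rule fls_eqI) simp

lemma lp_add_self_left [simp]: "(x::lp) + (x + y) = y"
  by (simp flip: add.assoc)

lemma lp_uminus [simp]: "- (x::lp) = x"
  using lp_add_self[of x] by (metis add_eq_0_iff2)

lemma lp_diff_eq_add [simp]: "(x::lp) - y = x + y"
  by simp

lemma lp_add_eq_0_iff: "(x::lp) + y = 0 \<longleftrightarrow> x = y"
  by (metis lp_add_self lp_add_self_left add.commute)

lemma laurent_poly_0 [simp]: "laurent_poly 0"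
  by (simp add: laurent_poly_def)

lemma laurent_poly_1 [simp]: "laurent_poly 1"
proof -
  have "{n. fls_nth (1::lp) n \<noteq> 0} = {0}" by auto
  thus ?thesis by (simp add: laurent_poly_def)
qed

lemma laurent_poly_add [simp]: "laurent_poly p \<Longrightarrow> laurent_poly q \<Longrightarrow> laurent_poly (p + q)"
  unfolding laurent_poly_def
  by (rule finite_subset[of _ "{n. fls_nth p n \<noteq> 0} \<union> {n. fls_nth q n \<noteq> 0}"]) auto

lemma laurent_poly_sum:
  "finite A \<Longrightarrow> (\<And>x. x \<in> A \<Longrightarrow> laurent_poly (f x)) \<Longrightarrow> laurent_poly (sum f A)"
  by (induction A rule: finite_induct) auto

lemma laurent_poly_shift [simp]: "laurent_poly p \<Longrightarrow> laurent_poly (fls_shift m p)"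
proof -
  assume "laurent_poly p"
  hence "finite ((\<lambda>k. k - m) ` {n. fls_nth p n \<noteq> 0})" by (simp add: laurent_poly_def)
  moreover have "{n. fls_nth (fls_shift m p) n \<noteq> 0} \<subseteq> (\<lambda>k. k - m) ` {n. fls_nth p n \<noteq> 0}"
    by (auto simp: image_iff) (metis add_diff_cancel_right')
  ultimately show ?thesis unfolding laurent_poly_def using finite_subset by blast
qed

lemma laurent_poly_monomial_expansion:
  "laurent_poly p \<Longrightarrow> p = (\<Sum>n\<in>{n. fls_nth p n \<noteq> 0}. fls_shift (-n) 1)"
  unfolding laurent_poly_def by (rule fls_eqI) (simp add: fls_nth_sum)

lemma laurent_poly_mult [simp]: "laurent_poly p \<Longrightarrow> laurent_poly q \<Longrightarrow> laurent_poly (p * q)"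
proof -
  assume p: "laurent_poly p" and q: "laurent_poly q"
  have "p * q = (\<Sum>n\<in>{n. fls_nth p n \<noteq> 0}. fls_shift (-n) q)"
    by (subst laurent_poly_monomial_expansion[OF p])
       (simp add: sum_distrib_right fls_shifted_times_simps)
  moreover have "laurent_poly (\<Sum>n\<in>{n. fls_nth p n \<noteq> 0}. fls_shift (-n) q)"
    using p q by (intro laurent_poly_sum) (auto simp: laurent_poly_def[of p])
  ultimately show ?thesis by simp
qed

lemma laurent_poly_X [simp]: "laurent_poly fls_X"
  by (simp add: fls_X_conv_shift_1)

lemma laurent_poly_X_inv [simp]: "laurent_poly fls_X_inv"
  by (simp add: fls_X_inv_conv_shift_1)

lemma X_X_inv [simp]: "fls_X * fls_X_inv = (1::lp)" "fls_X_inv * fls_X = (1::lp)"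
  "fls_X * (fls_X_inv * p) = (p::lp)" "fls_X_inv * (fls_X * p) = (p::lp)"
  by (simp_all add: fls_X_conv_shift_1 fls_X_inv_conv_shift_1 fls_shifted_times_simps)

lemma fls_nth_lbar: "fls_nth (lbar p) n = (if laurent_poly p then fls_nth p (-n) else 0)"
  unfolding laurent_poly_def by transfer simp

lemma laurent_poly_lbar [simp]: "laurent_poly (lbar p)"
proof (cases "laurent_poly p")
  case True
  hence "finite (uminus ` {n. fls_nth p n \<noteq> 0})" by (simp add: laurent_poly_def)
  moreover have "{n. fls_nth (lbar p) n \<noteq> 0} \<subseteq> uminus ` {n. fls_nth p n \<noteq> 0}"
    using True by (auto simp: fls_nth_lbar image_iff) (metis minus_minus)
  ultimately show ?thesis unfolding laurent_poly_def using finite_subset by blast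
next
  case False
  hence "lbar p = 0" by (intro fls_eqI) (simp add: fls_nth_lbar)
  thus ?thesis by simp
qed

lemma lbar_0 [simp]: "lbar 0 = 0"
  by (rule fls_eqI) (simp add: fls_nth_lbar)

lemma lbar_1 [simp]: "lbar 1 = 1"
  by (rule fls_eqI) (simp add: fls_nth_lbar)

lemma lbar_lbar [simp]: "laurent_poly p \<Longrightarrow> lbar (lbar p) = p"
  by (rule fls_eqI) (simp add: fls_nth_lbar)

lemma lbar_add: "laurent_poly p \<Longrightarrow> laurent_poly q \<Longrightarrow> lbar (p + q) = lbar p + lbar q"
  by (rule fls_eqI) (simp add: fls_nth_lbar)

lemma lbar_sum:
  "finite A \<Longrightarrow> (\<And>x. x \<in> A \<Longrightarrow> laurent_poly (f x)) \<Longrightarrow> lbar (sum f A) = (\<Sum>x\<in>A. lbar (f x))"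
  by (induction A rule: finite_induct) (auto simp: lbar_add laurent_poly_sum)

lemma lbar_shift: "laurent_poly p \<Longrightarrow> lbar (fls_shift m p) = fls_shift (-m) (lbar p)"
  by (rule fls_eqI) (simp add: fls_nth_lbar)

lemma lbar_mult: "laurent_poly p \<Longrightarrow> laurent_poly q \<Longrightarrow> lbar (p * q) = lbar p * lbar q"
proof -
  assume p: "laurent_poly p" and q: "laurent_poly q"
  define S where "S = {n. fls_nth p n \<noteq> 0}"
  have S: "finite S" using p by (simp add: S_def laurent_poly_def)
  have "p * q = (\<Sum>n\<in>S. fls_shift (-n) q)"
    by (subst laurent_poly_monomial_expansion[OF p])
       (simp add: S_def sum_distrib_right fls_shifted_times_simps)
  hence "lbar (p * q) = (\<Sum>n\<in>S. fls_shift n 1) * lbar q"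
    using S q by (simp add: lbar_sum lbar_shift sum_distrib_right fls_shifted_times_simps)
  moreover have "lbar p = (\<Sum>n\<in>S. fls_shift n 1)"
    using S by (subst laurent_poly_monomial_expansion[OF p]) (simp add: S_def lbar_sum lbar_shift)
  ultimately show ?thesis by simp
qed

lemma lbar_X [simp]: "lbar fls_X = fls_X_inv"
  by (simp add: fls_X_conv_shift_1 fls_X_inv_conv_shift_1 lbar_shift)

lemma lbar_X_inv [simp]: "lbar fls_X_inv = fls_X"
  by (simp add: fls_X_conv_shift_1 fls_X_inv_conv_shift_1 lbar_shift)

lemma palindrome_laurent_poly: "palindrome p \<Longrightarrow> laurent_poly p"
  by (simp add: palindrome_def)

lemma palindrome_lbar: "palindrome p \<Longrightarrow> lbar p = p"
  by (simp add: palindrome_def)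

lemma palindrome_0 [simp]: "palindrome 0"
  by (simp add: palindrome_def)

lemma palindrome_1 [simp]: "palindrome 1"
  by (simp add: palindrome_def)

lemma palindrome_add [simp]: "palindrome p \<Longrightarrow> palindrome q \<Longrightarrow> palindrome (p + q)"
  by (simp add: palindrome_def lbar_add)

lemma palindrome_mult [simp]: "palindrome p \<Longrightarrow> palindrome q \<Longrightarrow> palindrome (p * q)"
  by (simp add: palindrome_def lbar_mult)

lemma palindrome_X_inv_plus_X [simp]: "palindrome (fls_X_inv + fls_X)"
  by (simp add: palindrome_def lbar_add add.commute)

lemma X_inv_plus_X_nonzero: "(fls_X_inv + fls_X :: lp) \<noteq> 0"
  by (rule fls_nonzeroI[of _ "-1"]) simp

lemma fls_subdegree_X_inv_plus_X: "fls_subdegree (fls_X_inv + fls_X :: lp) = -1"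
  by (rule fls_subdegree_eqI) auto

lemma palindrome_subdegree_le_0:
  assumes "palindrome p" "p \<noteq> 0"
  shows "fls_subdegree p \<le> 0"
proof -
  have "fls_subdegree (lbar p) \<le> - fls_subdegree p"
    using palindrome_laurent_poly[OF assms(1)] nth_fls_subdegree_nonzero[OF assms(2)]
    by (intro fls_subdegree_leI) (simp add: fls_nth_lbar)
  thus ?thesis using assms(1) by (simp add: palindrome_def)
qed

text \<open>A palindrome of subdegree \<open>0\<close> has support \<open>{0}\<close>, and the only nonzero coefficient over
  \<open>\<int>\<^sub>2\<close> is \<open>1\<close>.\<close>
lemma palindrome_subdegree_0:
  assumes p: "palindrome p" and "p \<noteq> 0" and deg: "fls_subdegree p = 0"
  shows "p = 1"
proof (rule fls_eqI)
  fix n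
  have "fls_nth p n = 0" if "n \<noteq> 0" for n
  proof (cases "n < 0")
    case False
    have "fls_nth p (-n) = 0" using deg \<open>n \<noteq> 0\<close> False by simp
    thus ?thesis using p by (metis fls_nth_lbar palindrome_def minus_minus)
  qed (simp add: deg)
  moreover have "fls_nth p 0 = 1"
    using nth_fls_subdegree_nonzero[OF \<open>p \<noteq> 0\<close>] deg by (simp add: bit_not_zero_iff)
  ultimately show "fls_nth p n = fls_nth 1 n" by (cases "n = 0") simp_all
qed

lemma palindrome_factor_X_inv_plus_X:
  assumes w: "palindrome w" and L: "palindrome L" and wL: "w * L = fls_X_inv + fls_X"
    and "w \<noteq> 1"
  shows "w = fls_X_inv + fls_X"
proof -
  have "w \<noteq> 0" "L \<noteq> 0" using wL X_inv_plus_X_nonzero by auto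
  hence "fls_subdegree w + fls_subdegree L = -1"
    using wL by (simp flip: fls_subdegree_mult add: fls_subdegree_X_inv_plus_X)
  moreover have "fls_subdegree w \<le> 0" "fls_subdegree L \<le> 0"
    using palindrome_subdegree_le_0 w L \<open>w \<noteq> 0\<close> \<open>L \<noteq> 0\<close> by auto
  moreover have "fls_subdegree w \<noteq> 0"
    using palindrome_subdegree_0[OF w \<open>w \<noteq> 0\<close>] \<open>w \<noteq> 1\<close> by blast
  ultimately have "L = 1"
    using palindrome_subdegree_0[OF L \<open>L \<noteq> 0\<close>] by linarith
  thus ?thesis using wL by simp
qed

definition palindrome_split :: "lp \<Rightarrow> bool" where
  "palindrome_split p \<longleftrightarrow> (\<exists>d b. palindrome d \<and> palindrome b \<and> p = d + b * fls_X)"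

lemma palindrome_split_add:
  "palindrome_split p \<Longrightarrow> palindrome_split q \<Longrightarrow> palindrome_split (p + q)"
  unfolding palindrome_split_def
proof (elim exE conjE)
  fix d b d' b' assume "palindrome d" "palindrome b" "p = d + b * fls_X"
    "palindrome d'" "palindrome b'" "q = d' + b' * fls_X"
  thus "\<exists>d b. palindrome d \<and> palindrome b \<and> p + q = d + b * fls_X"
    by (intro exI[of _ "d + d'"] exI[of _ "b + b'"]) (simp add: algebra_simps)
qed

text \<open>Multiplication by \<open>u\<close> and \<open>u\<^sup>-\<^sup>1\<close> preserves the form \<open>d + b u\<close> because
  \<open>u\<^sup>2 = 1 + (u\<^sup>-\<^sup>1 + u) u\<close> and \<open>u\<^sup>-\<^sup>1 = (u\<^sup>-\<^sup>1 + u) + u\<close>.\<close>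
lemma palindrome_split_mult_X: "palindrome_split p \<Longrightarrow> palindrome_split (fls_X * p)"
  unfolding palindrome_split_def
proof (elim exE conjE)
  fix d b assume "palindrome d" "palindrome b" "p = d + b * fls_X"
  moreover have "fls_X * (d + b * fls_X) = b + (d + b * (fls_X_inv + fls_X)) * fls_X"
    by (simp add: algebra_simps)
  ultimately show "\<exists>d b. palindrome d \<and> palindrome b \<and> fls_X * p = d + b * fls_X"
    by auto
qed

lemma palindrome_split_mult_X_inv: "palindrome_split p \<Longrightarrow> palindrome_split (fls_X_inv * p)"
  unfolding palindrome_split_def
proof (elim exE conjE)
  fix d b assume "palindrome d" "palindrome b" "p = d + b * fls_X"
  moreover have "fls_X_inv * (d + b * fls_X) = (d * (fls_X_inv + fls_X) + b) + d * fls_X"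
    by (simp add: algebra_simps)
  ultimately show "\<exists>d b. palindrome d \<and> palindrome b \<and> fls_X_inv * p = d + b * fls_X"
    by (intro exI[of _ "d * (fls_X_inv + fls_X) + b"] exI[of _ d]) simp
qed

lemma palindrome_split_monomial: "palindrome_split (fls_shift n 1)"
proof (induction n rule: int_induct[where k = 0])
  case base
  show ?case unfolding palindrome_split_def by (intro exI[of _ 1] exI[of _ 0]) simp
next
  case (step1 i)
  have "fls_shift (i + 1) 1 = fls_X_inv * fls_shift i (1::lp)"
    by (simp add: fls_X_inv_conv_shift_1 fls_shifted_times_simps add.commute)
  thus ?case using palindrome_split_mult_X_inv[OF step1(2)] by simp
next
  case (step2 i)
  have "fls_shift (i - 1) 1 = fls_X * fls_shift i (1::lp)"
    by (simp add: fls_X_conv_shift_1 fls_shifted_times_simps)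
  thus ?case using palindrome_split_mult_X[OF step2(2)] by simp
qed

lemma laurent_poly_palindrome_split:
  assumes "laurent_poly p"
  obtains d b where "palindrome d" "palindrome b" "p = d + b * fls_X"
proof -
  have "finite {n. fls_nth p n \<noteq> 0}" using assms by (simp add: laurent_poly_def)
  hence "palindrome_split (\<Sum>n\<in>{n. fls_nth p n \<noteq> 0}. fls_shift (-n) 1)"
  proof (induction rule: finite_induct)
    case empty
    show ?case unfolding palindrome_split_def by (intro exI[of _ 0] exI[of _ 0]) simp
  qed (simp add: palindrome_split_add palindrome_split_monomial)
  thus ?thesis
    using that laurent_poly_monomial_expansion[OF assms] by (auto simp: palindrome_split_def)
qed

lemma euclidean_ring_bezout:
  fixes a b :: "'a::euclidean_ring"
  shows "\<exists>r s g. r * a + s * b = g \<and> g dvd a \<and> g dvd b"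
proof (induction "euclidean_size b" arbitrary: a b rule: less_induct)
  case less
  show ?case
  proof (cases "b = 0")
    case True
    thus ?thesis by (intro exI[of _ 1] exI[of _ 0] exI[of _ a]) simp
  next
    case False
    hence "euclidean_size (a mod b) < euclidean_size b" by (rule mod_size_less)
    then obtain r s g where g: "r * b + s * (a mod b) = g" "g dvd b" "g dvd a mod b"
      using less by blast
    have "s * a + (r - s * (a div b)) * b = g"
      using g(1) by (simp add: minus_div_mult_eq_mod [symmetric] algebra_simps)
    moreover have "g dvd a" using g(2,3) by (metis dvd_mod_iff)
    ultimately show ?thesis using g(2) by blast
  qed
qed

definition fls_of_poly :: "'a::comm_ring_1 poly \<Rightarrow> 'a fls" where
  "fls_of_poly f = fps_to_fls (fps_of_poly f)"

lemma fls_of_poly_add: "fls_of_poly (f + g) = fls_of_poly f + fls_of_poly g"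
  by (simp add: fls_of_poly_def fps_of_poly_add)

lemma fls_of_poly_mult: "fls_of_poly (f * g) = fls_of_poly f * fls_of_poly g"
  by (simp add: fls_of_poly_def fps_of_poly_mult fls_times_fps_to_fls)

lemma laurent_poly_conv_poly:
  assumes "laurent_poly p"
  obtains f m where "p = fls_shift m (fls_of_poly f)"
proof -
  define S where "S = {n. fls_nth p n \<noteq> 0}"
  define s where "s = fls_subdegree p"
  define N where "N = Max (insert 0 S)"
  have N: "fls_nth p n = 0" if "n > N" for n
    using assms that Max_ge[of "insert 0 S" n] by (force simp: S_def N_def laurent_poly_def)
  define f where "f = truncate_fps (nat (N - s) + 1) (fls_regpart (fls_shift s p))"
  have "p = fls_shift (-s) (fls_of_poly f)"
  proof (rule fls_eqI)
    fix n
    show "fls_nth p n = fls_nth (fls_shift (-s) (fls_of_poly f)) n"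
      using N[of n] by (auto simp: fls_of_poly_def f_def s_def coeff_truncate_fps)
  qed
  thus ?thesis by (rule that)
qed

lemma laurent_poly_fls_of_poly [simp]: "laurent_poly (fls_of_poly f)"
proof -
  have "{n. fls_nth (fls_of_poly f) n \<noteq> 0} \<subseteq> int ` {..degree f}"
  proof
    fix n assume "n \<in> {n. fls_nth (fls_of_poly f) n \<noteq> 0}"
    hence "0 \<le> n" "nat n \<le> degree f"
      by (auto simp: fls_of_poly_def le_degree split: if_splits)
    thus "n \<in> int ` {..degree f}" by (auto simp: image_iff intro!: bexI[of _ "nat n"])
  qed
  thus ?thesis unfolding laurent_poly_def using finite_subset by blast
qed

lemma minimal_bezout:
  assumes x: "laurent_poly x" and y: "laurent_poly y" and "minimal (x, y)"
  obtains r s where "laurent_poly r" "laurent_poly s" "r * x + s * y = 1"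
proof -
  obtain f1 m1 where x: "x = fls_shift m1 (fls_of_poly f1)"
    using laurent_poly_conv_poly[OF x] by blast
  obtain f2 m2 where y: "y = fls_shift m2 (fls_of_poly f2)"
    using laurent_poly_conv_poly[OF y] by blast
  obtain \<alpha> \<beta> g where g: "\<alpha> * f1 + \<beta> * f2 = g" "g dvd f1" "g dvd f2"
    using euclidean_ring_bezout by blast
  obtain h1 h2 where h: "f1 = g * h1" "f2 = g * h2" using g(2,3) by (meson dvd_def)
  have "lp_dvd (fls_of_poly g) x" unfolding lp_dvd_def x h(1)
    by (intro exI[of _ "fls_shift m1 (fls_of_poly h1)"])
       (simp add: fls_of_poly_mult fls_shifted_times_simps)
  moreover have "lp_dvd (fls_of_poly g) y" unfolding lp_dvd_def y h(2)
    by (intro exI[of _ "fls_shift m2 (fls_of_poly h2)"])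
       (simp add: fls_of_poly_mult fls_shifted_times_simps)
  ultimately have "lp_unit (fls_of_poly g)" using assms(3) unfolding minimal_def by auto
  then obtain z where z: "laurent_poly z" "fls_of_poly g * z = 1" unfolding lp_unit_def by blast
  define r where "r = fls_shift (-m1) (fls_of_poly \<alpha>) * z"
  define s where "s = fls_shift (-m2) (fls_of_poly \<beta>) * z"
  have "r * x + s * y = fls_of_poly (\<alpha> * f1 + \<beta> * f2) * z"
    unfolding r_def s_def x y
    by (simp add: fls_of_poly_mult fls_of_poly_add fls_shifted_times_simps algebra_simps)
  also have "\<dots> = 1" using g(1) z(2) by simp
  finally show ?thesis using z(1) that[of r s] by (simp add: r_def s_def)
qed

lemma minimal_nonzero: "minimal (x, y) \<Longrightarrow> x \<noteq> 0 \<or> y \<noteq> 0"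
proof (rule ccontr)
  assume "minimal (x, y)" "\<not> (x \<noteq> 0 \<or> y \<noteq> 0)"
  hence "lp_unit 0" unfolding minimal_def lp_dvd_def
    by (metis laurent_poly_0 fst_conv snd_conv mult_zero_left)
  thus False unfolding lp_unit_def by simp
qed

definition mat_mult :: "lmat \<Rightarrow> lmat \<Rightarrow> lmat" where
  "mat_mult A B = (case A of (a11, a12, a21, a22) \<Rightarrow> case B of (b11, b12, b21, b22) \<Rightarrow>
     (a11 * b11 + a12 * b21, a11 * b12 + a12 * b22, a21 * b11 + a22 * b21, a21 * b12 + a22 * b22))"

definition mat_adj :: "lmat \<Rightarrow> lmat" where
  "mat_adj A = (case A of (a11, a12, a21, a22) \<Rightarrow> (a22, - a12, - a21, a11))"

lemma mat_vec_mat_mult: "mat_vec (mat_mult A B) x = mat_vec A (mat_vec B x)"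
  by (cases A, cases B, cases x) (simp add: mat_mult_def mat_vec_def algebra_simps)

lemma mat_vec_scale:
  "mat_vec A (c * x1, c * x2) = map_prod ((*) c) ((*) c) (mat_vec A (x1, x2))"
  by (cases A) (simp add: mat_vec_def algebra_simps)

lemma CSCA_mat_mult: "CSCA A \<Longrightarrow> CSCA B \<Longrightarrow> CSCA (mat_mult A B)"
proof (cases A, cases B)
  fix a11 a12 a21 a22 b11 b12 b21 b22
  assume "CSCA A" "CSCA B" "A = (a11, a12, a21, a22)" "B = (b11, b12, b21, b22)"
  moreover have "(a11 * b11 + a12 * b21) * (a21 * b12 + a22 * b22)
      - (a11 * b12 + a12 * b22) * (a21 * b11 + a22 * b21)
      = (a11 * a22 - a12 * a21) * (b11 * b22 - b12 * b21)"
    by (simp add: algebra_simps)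
  ultimately show ?thesis by (simp add: CSCA_def mat_mult_def)
qed

lemma CSCA_mat_adj: "CSCA A \<Longrightarrow> CSCA (mat_adj A)"
  by (cases A) (simp add: CSCA_def mat_adj_def mult.commute)

lemma mat_vec_mat_adj_cancel: "CSCA A \<Longrightarrow> mat_vec (mat_adj A) (mat_vec A x) = x"
proof (cases A, cases x)
  fix a11 a12 a21 a22 x1 x2
  assume "CSCA A" "A = (a11, a12, a21, a22)" "x = (x1, x2)"
  moreover have "a22 * (a11 * x1 + a12 * x2) - a12 * (a21 * x1 + a22 * x2) = (a11 * a22 - a12 * a21) * x1"
    "- a21 * (a11 * x1 + a12 * x2) + a11 * (a21 * x1 + a22 * x2) = (a11 * a22 - a12 * a21) * x2"
    by (simp_all del: lp_uminus add: algebra_simps)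
  ultimately show ?thesis by (simp del: lp_uminus add: CSCA_def mat_adj_def mat_vec_def)
qed

lemma CSCA_to_X_solution:
  assumes "CSCA (a, b, c, d)" and "mat_vec (a, b, c, d) (x1, x2) = (1, fls_X)"
  shows "x1 = d + b * fls_X" "x2 = c + a * fls_X"
  using mat_vec_mat_adj_cancel[OF assms(1), of "(x1, x2)"] assms(2)
  by (simp_all add: mat_adj_def mat_vec_def)

lemma mat_vec_split:
  "mat_vec (a, b, c, d) (d + b * fls_X, c + a * fls_X) = (a * d + b * c, (a * d + b * c) * fls_X)"
  by (simp add: mat_vec_def algebra_simps)

lemma wedge_vbar_split:
  assumes "palindrome a" "palindrome b" "palindrome c" "palindrome d"
  shows "wedge (d + b * fls_X, c + a * fls_X) (vbar (d + b * fls_X, c + a * fls_X))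
       = (a * d + b * c) * (fls_X_inv + fls_X)"
  using assms
  by (simp add: wedge_def vbar_def lbar_add lbar_mult palindrome_laurent_poly palindrome_lbar
      algebra_simps)

lemma CSCA_to_X_iff_wedge_vbar:
  assumes "laurent_poly x1" "laurent_poly x2"
  shows "(\<exists>B. CSCA B \<and> mat_vec B (x1, x2) = (1, fls_X))
     \<longleftrightarrow> wedge (x1, x2) (vbar (x1, x2)) = fls_X_inv + fls_X"
proof
  assume "\<exists>B. CSCA B \<and> mat_vec B (x1, x2) = (1, fls_X)"
  then obtain a b c d where B: "CSCA (a, b, c, d)" "mat_vec (a, b, c, d) (x1, x2) = (1, fls_X)"
    by auto
  hence "palindrome a" "palindrome b" "palindrome c" "palindrome d" "a * d + b * c = 1"
    by (simp_all add: CSCA_def)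
  thus "wedge (x1, x2) (vbar (x1, x2)) = fls_X_inv + fls_X"
    using CSCA_to_X_solution[OF B] wedge_vbar_split by simp
next
  assume w: "wedge (x1, x2) (vbar (x1, x2)) = fls_X_inv + fls_X"
  obtain d b where d: "palindrome d" "palindrome b" "x1 = d + b * fls_X"
    using laurent_poly_palindrome_split[OF assms(1)] .
  obtain c a where c: "palindrome c" "palindrome a" "x2 = c + a * fls_X"
    using laurent_poly_palindrome_split[OF assms(2)] .
  have "(a * d + b * c) * (fls_X_inv + fls_X) = 1 * (fls_X_inv + fls_X)"
    using w wedge_vbar_split[of a b c d] c d by simp
  hence "a * d + b * c = 1" using X_inv_plus_X_nonzero by (metis mult_right_cancel)
  hence "CSCA (a, b, c, d) \<and> mat_vec (a, b, c, d) (x1, x2) = (1, fls_X)"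
    using c d mat_vec_split[of a b c d] by (simp add: CSCA_def)
  thus "\<exists>B. CSCA B \<and> mat_vec B (x1, x2) = (1, fls_X)" by blast
qed

definition companion_X :: lmat where
  "companion_X = (0, 1, 1, fls_X_inv + fls_X)"

lemma CSCA_companion_X: "CSCA companion_X"
  by (simp add: CSCA_def companion_X_def)

lemma mat_vec_companion_X: "mat_vec companion_X (1, fls_X) = (fls_X * 1, fls_X * fls_X)"
  by (simp add: companion_X_def mat_vec_def algebra_simps)

lemma CSCA_eigen_of_CSCA_to_X:
  assumes "CSCA B" and "mat_vec B xi = (1, fls_X)"
  shows "CSCA (mat_mult (mat_adj B) (mat_mult companion_X B))
     \<and> mat_vec (mat_mult (mat_adj B) (mat_mult companion_X B)) xi = (fls_X * fst xi, fls_X * snd xi)"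
proof
  show "CSCA (mat_mult (mat_adj B) (mat_mult companion_X B))"
    using assms(1) by (simp add: CSCA_mat_mult CSCA_mat_adj CSCA_companion_X)
  have "xi = mat_vec (mat_adj B) (1, fls_X)"
    using mat_vec_mat_adj_cancel[OF assms(1), of xi] assms(2) by simp
  thus "mat_vec (mat_mult (mat_adj B) (mat_mult companion_X B)) xi = (fls_X * fst xi, fls_X * snd xi)"
    using assms(2) by (simp add: mat_vec_mat_mult mat_vec_companion_X mat_vec_scale
      del: mult_1_right) (metis prod.collapse map_prod_simp)
qed

lemma CSCA_eigen_X_trace:
  assumes A: "CSCA (a, b, c, d)"
    and eigen: "mat_vec (a, b, c, d) (x1, x2) = (fls_X * x1, fls_X * x2)"
    and nonzero: "x1 \<noteq> 0 \<or> x2 \<noteq> 0"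
  shows "d = a + (fls_X_inv + fls_X)"
proof -
  have det: "a * d + b * c = 1" using A by (simp add: CSCA_def)
  have e: "a * x1 + b * x2 + fls_X * x1 = 0" "c * x1 + d * x2 + fls_X * x2 = 0"
    using eigen by (simp_all add: mat_vec_def)
  define \<chi> where "\<chi> = a * d + b * c + fls_X * (a + d) + fls_X * fls_X"
  have "\<chi> * x1 = (d + fls_X) * (a * x1 + b * x2 + fls_X * x1) + b * (c * x1 + d * x2 + fls_X * x2)"
    "\<chi> * x2 = (a + fls_X) * (c * x1 + d * x2 + fls_X * x2) + c * (a * x1 + b * x2 + fls_X * x1)"
    by (simp_all add: \<chi>_def algebra_simps)
  hence "\<chi> = 0" using e nonzero by auto
  hence "fls_X_inv * \<chi> = 0" by simp
  moreover have "fls_X_inv * \<chi> = fls_X_inv + (a + d) + fls_X"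
    using det by (simp add: \<chi>_def algebra_simps)
  ultimately have "fls_X_inv + (a + d) + fls_X = 0" by simp
  moreover have "d = (fls_X_inv + (a + d) + fls_X) + (a + (fls_X_inv + fls_X))"
    by (simp add: algebra_simps)
  ultimately show ?thesis by simp
qed

lemma fls_nth_add_lbar_0: "laurent_poly z \<Longrightarrow> fls_nth (z + lbar z) 0 = 0"
  by (simp add: fls_nth_lbar)

lemma wedge_vbar_neq_1:
  assumes "laurent_poly x1" "laurent_poly x2"
  shows "wedge (x1, x2) (vbar (x1, x2)) \<noteq> 1"
proof -
  have "wedge (x1, x2) (vbar (x1, x2)) = x1 * lbar x2 + lbar (x1 * lbar x2)"
    using assms by (simp add: wedge_def vbar_def lbar_mult mult.commute)
  hence "fls_nth (wedge (x1, x2) (vbar (x1, x2))) 0 = 0"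
    using assms by (simp only: fls_nth_add_lbar_0 laurent_poly_mult laurent_poly_lbar)
  thus ?thesis by auto
qed

lemma palindrome_wedge_vbar:
  "laurent_poly x1 \<Longrightarrow> laurent_poly x2 \<Longrightarrow> palindrome (wedge (x1, x2) (vbar (x1, x2)))"
  by (simp add: palindrome_def wedge_def vbar_def lbar_add lbar_mult ac_simps)

lemma wedge_vbar_eigen_identities:
  assumes pal: "palindrome a" "palindrome b" "palindrome c"
    and x: "laurent_poly x1" "laurent_poly x2"
    and E1: "(a + fls_X) * x1 = b * x2" and E2: "c * x1 = (a + fls_X_inv) * x2"
  defines "w \<equiv> wedge (x1, x2) (vbar (x1, x2))" and "t \<equiv> fls_X_inv + fls_X"
  shows "b * w = t * (x1 * lbar x1)" "(a + fls_X_inv) * w = t * (x1 * lbar x2)"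
    "(a + fls_X) * w = t * (x2 * lbar x1)" "c * w = t * (x2 * lbar x2)"
proof -
  have F1: "(a + fls_X_inv) * lbar x1 = b * lbar x2"
    using arg_cong[OF E1, of lbar] pal x
    by (simp add: lbar_mult lbar_add palindrome_laurent_poly palindrome_lbar)
  have F2: "c * lbar x1 = (a + fls_X) * lbar x2"
    using arg_cong[OF E2, of lbar] pal x
    by (simp add: lbar_mult lbar_add palindrome_laurent_poly palindrome_lbar)
  have w: "w = x1 * lbar x2 + lbar x1 * x2" by (simp add: w_def wedge_def vbar_def)
  have "b * w = x1 * (b * lbar x2) + lbar x1 * (b * x2)" by (simp add: w algebra_simps)
  also have "\<dots> = x1 * ((a + fls_X_inv) * lbar x1) + lbar x1 * ((a + fls_X) * x1)"
    by (simp only: E1 F1)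
  also have "\<dots> = t * (x1 * lbar x1)" by (simp add: t_def algebra_simps)
  finally show "b * w = t * (x1 * lbar x1)" .
  have "(a + fls_X_inv) * w = x1 * lbar x2 * (a + fls_X_inv) + x2 * ((a + fls_X_inv) * lbar x1)"
    by (simp add: w algebra_simps)
  also have "\<dots> = x1 * lbar x2 * (a + fls_X_inv) + lbar x2 * ((a + fls_X) * x1)"
    using E1 F1 by (metis mult.commute mult.left_commute)
  also have "\<dots> = t * (x1 * lbar x2)" by (simp add: t_def algebra_simps)
  finally show "(a + fls_X_inv) * w = t * (x1 * lbar x2)" .
  have "(a + fls_X) * w = lbar x2 * ((a + fls_X) * x1) + x2 * lbar x1 * (a + fls_X)"
    by (simp add: w algebra_simps)
  also have "\<dots> = x2 * ((a + fls_X_inv) * lbar x1) + x2 * lbar x1 * (a + fls_X)"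
    using E1 F1 by (metis mult.commute mult.left_commute)
  also have "\<dots> = t * (x2 * lbar x1)" by (simp add: t_def algebra_simps)
  finally show "(a + fls_X) * w = t * (x2 * lbar x1)" .
  have "c * w = lbar x2 * (c * x1) + x2 * (c * lbar x1)" by (simp add: w algebra_simps)
  also have "\<dots> = lbar x2 * ((a + fls_X_inv) * x2) + x2 * ((a + fls_X) * lbar x2)"
    by (simp only: E2 F2)
  also have "\<dots> = t * (x2 * lbar x2)" by (simp add: t_def algebra_simps)
  finally show "c * w = t * (x2 * lbar x2)" .
qed

lemma wedge_vbar_of_CSCA_eigen_X:
  assumes x: "laurent_poly x1" "laurent_poly x2" and min: "minimal (x1, x2)"
    and A: "CSCA (a, b, c, d)"
    and eigen: "mat_vec (a, b, c, d) (x1, x2) = (fls_X * x1, fls_X * x2)"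
  shows "wedge (x1, x2) (vbar (x1, x2)) = fls_X_inv + fls_X"
proof -
  define w where "w = wedge (x1, x2) (vbar (x1, x2))"
  define t :: lp where "t = fls_X_inv + fls_X"
  have pal: "palindrome a" "palindrome b" "palindrome c" using A by (simp_all add: CSCA_def)
  have d: "d = a + t"
    unfolding t_def using CSCA_eigen_X_trace[OF A eigen minimal_nonzero[OF min]] .
  have "(a + fls_X) * x1 + b * x2 = 0" "c * x1 + (a + fls_X_inv) * x2 = 0"
    using eigen by (simp_all add: mat_vec_def d t_def algebra_simps)
  hence E: "(a + fls_X) * x1 = b * x2" "c * x1 = (a + fls_X_inv) * x2"
    by (simp_all add: lp_add_eq_0_iff)
  note W = wedge_vbar_eigen_identities[OF pal x E, folded w_def t_def]
  obtain r s where rs: "laurent_poly r" "laurent_poly s" "r * x1 + s * x2 = 1"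
    using minimal_bezout[OF x min] .
  define L where "L = b * (r * lbar r) + (a + fls_X_inv) * (r * lbar s)
    + (a + fls_X) * (s * lbar r) + c * (s * lbar s)"
  have "w * L = r * lbar r * (b * w) + r * lbar s * ((a + fls_X_inv) * w)
      + s * lbar r * ((a + fls_X) * w) + s * lbar s * (c * w)"
    by (simp add: L_def algebra_simps)
  also have "\<dots> = t * ((r * x1 + s * x2) * lbar (r * x1 + s * x2))"
    unfolding W using rs(1,2) x by (simp add: lbar_add lbar_mult algebra_simps)
  finally have wL: "w * L = t" using rs(3) by simp
  have "palindrome L"
  proof -
    have "lbar L = b * (lbar r * r) + (a + fls_X) * (lbar r * s)
        + (a + fls_X_inv) * (lbar s * r) + c * (lbar s * s)"
      using pal rs(1,2)
      by (simp add: L_def lbar_add lbar_mult palindrome_laurent_poly palindrome_lbar)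
    thus ?thesis using pal rs(1,2) by (simp add: palindrome_def L_def palindrome_laurent_poly ac_simps)
  qed
  hence "w = t"
    using palindrome_factor_X_inv_plus_X[OF palindrome_wedge_vbar[OF x] _ _ wedge_vbar_neq_1[OF x]] wL
    unfolding w_def t_def by blast
  thus ?thesis by (simp add: w_def t_def)
qed

theorem mainTheorem4:
  fixes xi :: "lp \<times> lp"
  assumes "laurent_poly (fst xi)" and "laurent_poly (snd xi)"
    and "minimal xi"
  shows "((\<exists>A. CSCA A \<and> mat_vec A xi = (fls_X * fst xi, fls_X * snd xi))
            \<longleftrightarrow> (\<exists>B. CSCA B \<and> mat_vec B xi = (1, fls_X)))
       \<and> ((\<exists>B. CSCA B \<and> mat_vec B xi = (1, fls_X))
            \<longleftrightarrow> wedge xi (vbar xi) = fls_X_inv + fls_X)"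
proof -
  obtain x1 x2 where xi: "xi = (x1, x2)" by (cases xi)
  have x: "laurent_poly x1" "laurent_poly x2" "minimal (x1, x2)" using assms xi by auto
  have "wedge xi (vbar xi) = fls_X_inv + fls_X"
    if "CSCA A" "mat_vec A xi = (fls_X * fst xi, fls_X * snd xi)" for A
    using that wedge_vbar_of_CSCA_eigen_X[OF x] xi by (cases A) auto
  moreover have "\<exists>A. CSCA A \<and> mat_vec A xi = (fls_X * fst xi, fls_X * snd xi)"
    if "CSCA B" "mat_vec B xi = (1, fls_X)" for B
    using CSCA_eigen_of_CSCA_to_X[OF that] by blast
  moreover note CSCA_to_X_iff_wedge_vbar[OF x(1,2), folded xi]
  ultimately show ?thesis by blast
qed

end
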